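(* Let $m$ be a positive integer and $x>1$ an integer. Let $j_m(x)\in\{0,\dots,x-1\}$ be the column of row $x$ of $T_m$ containing the value $1$. Then $J_{m+1}(x)$ is the element of $\{1,2,\dots,x\}$ congruent to $m-j_m(x)$ modulo $x$. Equivalently, in the Josephus game played on row $x$ of $T_m$, the entry $1$ is the last one remaining.
   Context: The triangle $T_m$ is an array whose row $x$ ($x=1,2,\dots$) has $x$ entries, in columns $0,\dots,x-1$. Row $1$ is the single entry $1$. For $x>1$, row $x$ is obtained from row $x-1$ by rotating it cyclically left by $m$ positions (the entry in column $c$ of row $x-1$ moves to column $(c-m)\bmod(x-1)\in\{0,\dots,x-2\}$ of row $x$), then appending in column $x-1$ a new entry equal to $1$ plus the entry in column $0$ of row $x-1$. Each row of $T_m$ contains exactly one entry equal to $1$. Josephus problem: place the integers $1,\dots,x$ clockwise in a circle; starting the count at $1$, repeatedly count $n$ consecutive remaining numbers clockwise and eliminate the $n$-th one counted, resuming the count at the next remaining number, until one number remains; $J_n(x)$ is that number. Josephus game on row $x$ of $T_m$: start at the entry in column $(m-1)\bmod x$, counting it as $1$; moving cyclically to the left (from column $0$ wrap to column $x-1$) over entries not yet crossed out, count $1,2,\dots,m+1$ and cross out the entry counted $m+1$; the next count starts (as $1$) at the next not-crossed-out entry to its left. Repeat until one entry remains. *)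

theory Defs
  imports Main "HOL-Number_Theory.Cong"
begin

text \<open>Row x of the triangle T_m, as a list of length x (index = column).
  Rotating cyclically left by m positions is List.rotate m
  (entry in column c moves to column (c - m) mod (x-1)).\<close>
fun Trow :: "nat \<Rightarrow> nat \<Rightarrow> nat list" where
  "Trow m 0 = []"
| "Trow m (Suc 0) = [1]"
| "Trow m (Suc (Suc n)) =
     (let r = Trow m (Suc n) in rotate m r @ [hd r + 1])"

definition jcol :: "nat \<Rightarrow> nat \<Rightarrow> nat" where
  "jcol m x = (THE c. c < x \<and> Trow m x ! c = 1)"

text \<open>Generic elimination process on a circle: xs lists the remaining items
  in the order of counting; counting starts (as 1) at index i; the n-th counted
  item (index (i+n-1) mod length) is removed and counting resumes at the next
  remaining item, which then sits at the same index (mod the new length).\<close>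
function elim_last :: "nat \<Rightarrow> 'a list \<Rightarrow> nat \<Rightarrow> 'a" where
  "elim_last n xs i =
     (if length xs \<le> 1 then hd xs
      else (let k = (i + n - 1) mod length xs
            in elim_last n (take k xs @ drop (Suc k) xs) (k mod (length xs - 1))))"
  by pat_completeness auto
termination
proof (relation "measure (\<lambda>(n, xs, i). length xs)")
  fix n xs i k
  assume "\<not> length xs \<le> 1" and "k = (i + n - 1) mod length xs"
  then have "length xs > 0" by linarith
  then have "k < length xs" using \<open>k = _\<close> by simp
  then show "((n, take k xs @ drop (Suc k) xs, k mod (length xs - 1)), n, xs, i)
      \<in> measure (\<lambda>(n, xs, i). length xs)" by simp
qed simp

definition josephus :: "nat \<Rightarrow> nat \<Rightarrow> nat" where
  "josephus n x = elim_last n [1..<x+1] 0"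

text \<open>Josephus game on row x of T_m, tracked by column: moving left means
  visiting columns in decreasing order cyclically, i.e. going forward in
  rev [0..<x]; column c sits at index x - 1 - c of that list.  Start at column
  (m-1) mod x, cross out every (m+1)-th.\<close>
definition game_last_col :: "nat \<Rightarrow> nat \<Rightarrow> nat" where
  "game_last_col m x = elim_last (m + 1) (rev [0..<x]) (x - 1 - ((m - 1) mod x))"

end

theory Submission
  imports Defs
begin

text \<open>The survivor of the elimination with step n on a circle of L items sits at an offset
  from the starting position that does not depend on the items; it obeys the classical Josephus
  recurrence, and J_n(x) is this offset plus one.  In T_m the rotations move the entry 1 from
  column j of row x to column (j - m) mod x of row x + 1; solving this recurrence against the
  Josephus recurrence for step m + 1 puts the 1 in the column congruent to m - 1 minus the
  offset.  The game on row x starts in column (m - 1) mod x and moves leftwards, so its survivor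
  lies exactly that offset further left, i.e. on the 1.\<close>

declare elim_last.simps[simp del]

fun josephus_offset :: "nat \<Rightarrow> nat \<Rightarrow> nat" where
  "josephus_offset n 0 = 0"
| "josephus_offset n (Suc 0) = 0"
| "josephus_offset n (Suc (Suc L)) = (n + josephus_offset n (Suc L)) mod Suc (Suc L)"

lemma josephus_offset_less: "L \<ge> 1 \<Longrightarrow> josephus_offset n L < L"
  by (induction n L rule: josephus_offset.induct) auto

lemma nth_remove_nth_mod:
  assumes "length xs = Suc L" "k < Suc L" "t < L"
  shows "(take k xs @ drop (Suc k) xs) ! ((k + t) mod L) = xs ! ((k + 1 + t) mod Suc L)"
proof (cases "k + t < L")
  case True
  then show ?thesis using assms by (simp add: nth_append)
next
  case False
  then have "(k + t) mod L = k + t - L" "(k + 1 + t) mod Suc L = k + t - L" "k + t - L < k"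
    using assms by (simp_all add: le_mod_geq)
  then show ?thesis using assms by (simp add: nth_append)
qed

lemma elim_last_eq_nth_offset:
  assumes "n > 0" "xs \<noteq> []"
  shows "elim_last n xs i = xs ! ((i + josephus_offset n (length xs)) mod length xs)"
  using assms
proof (induction n xs i rule: elim_last.induct)
  case (1 n xs i)
  show ?case
  proof (cases "length xs \<le> 1")
    case True
    with "1.prems" obtain a where "xs = [a]" by (cases xs) auto
    then show ?thesis by (simp add: elim_last.simps)
  next
    case False
    define L where "L = length xs - 1"
    have lx: "length xs = Suc L" and "L \<ge> 1" using False by (auto simp: L_def)
    define k where "k = (i + n - 1) mod length xs"
    define ys where "ys = take k xs @ drop (Suc k) xs"
    define t where "t = josephus_offset n L"
    have "k < Suc L" "t < L" "length ys = L"
      using lx \<open>L \<ge> 1\<close> josephus_offset_less by (auto simp: k_def ys_def t_def)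
    have "elim_last n xs i = elim_last n ys (k mod L)"
      using False lx by (subst elim_last.simps) (simp add: Let_def k_def ys_def)
    also have "\<dots> = ys ! ((k mod L + t) mod L)"
      using "1.IH"[OF False k_def "1.prems"(1), folded ys_def L_def] \<open>length ys = L\<close>
        \<open>L \<ge> 1\<close>
      by (simp add: t_def length_0_conv[symmetric])
    also have "\<dots> = xs ! ((k + 1 + t) mod Suc L)"
      using nth_remove_nth_mod[OF lx \<open>k < Suc L\<close> \<open>t < L\<close>]
      by (simp add: ys_def mod_add_left_eq)
    also have "(k + 1 + t) mod Suc L = (i + josephus_offset n (length xs)) mod length xs"
    proof -
      obtain L' where "L = Suc L'" using \<open>L \<ge> 1\<close> by (cases L) auto
      then have "josephus_offset n (Suc L) = (n + t) mod Suc L" by (simp add: t_def)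
      moreover have "i + (n + t) = (i + n - 1) + (1 + t)" using "1.prems"(1) by linarith
      ultimately show ?thesis
        unfolding lx k_def by (metis add.assoc mod_add_left_eq mod_add_right_eq)
    qed
    finally show ?thesis .
  qed
qed

lemma josephus_eq_offset_plus_1:
  assumes "n > 0" "x \<ge> 1"
  shows "josephus n x = josephus_offset n x + 1"
proof -
  have "josephus_offset n x < x" using josephus_offset_less assms(2) .
  then show ?thesis
    using elim_last_eq_nth_offset[of n "[1..<x+1]" 0] assms
    by (simp add: josephus_def del: upt_Suc)
qed

lemma Trow_length: "length (Trow m x) = x"
  by (induction m x rule: Trow.induct) (auto simp: Let_def)

lemma Trow_ge_1: "v \<in> set (Trow m x) \<Longrightarrow> v \<ge> 1"
  by (induction m x arbitrary: v rule: Trow.induct) (auto simp: Let_def)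

fun one_col :: "nat \<Rightarrow> nat \<Rightarrow> nat" where
  "one_col m 0 = 0"
| "one_col m (Suc 0) = 0"
| "one_col m (Suc (Suc n)) = nat ((int (one_col m (Suc n)) - int m) mod int (Suc n))"

lemma int_one_col_Suc_Suc:
  "int (one_col m (Suc (Suc n))) = (int (one_col m (Suc n)) - int m) mod int (Suc n)"
  by simp

lemma one_col_Suc_Suc_less: "one_col m (Suc (Suc n)) < Suc n"
  by (simp add: nat_less_iff)

lemma one_col_less: "x \<ge> 1 \<Longrightarrow> one_col m x < x"
proof (induction m x rule: one_col.induct)
  case (3 m n)
  show ?case using one_col_Suc_Suc_less less_SucI by blast
qed auto

lemma add_mod_eq_iff_eq_diff_mod:
  fixes c j m L :: nat
  assumes "c < L" "j < L"
  shows "(c + m) mod L = j \<longleftrightarrow> int c = (int j - int m) mod int L"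
proof -
  have "(c + m) mod L = j \<longleftrightarrow> (int c + int m) mod int L = int j mod int L"
    using assms(2) by (simp only: of_nat_add[symmetric] of_nat_mod[symmetric] of_nat_eq_iff mod_less)
  also have "\<dots> \<longleftrightarrow> int c mod int L = (int j - int m) mod int L"
    by (simp add: mod_eq_dvd_iff algebra_simps)
  also have "\<dots> \<longleftrightarrow> int c = (int j - int m) mod int L"
    using assms(1) by simp
  finally show ?thesis .
qed

lemma Trow_nth_eq_1_iff:
  "x \<ge> 1 \<Longrightarrow> c < x \<Longrightarrow> Trow m x ! c = 1 \<longleftrightarrow> c = one_col m x"
proof (induction m x arbitrary: c rule: Trow.induct)
  case (3 m n)
  define r where "r = Trow m (Suc n)"
  have "length r = Suc n" by (simp add: r_def Trow_length)
  have row: "Trow m (Suc (Suc n)) = rotate m r @ [hd r + 1]" by (simp add: r_def Let_def)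
  show ?case
  proof (cases "c < Suc n")
    case True
    have "Trow m (Suc (Suc n)) ! c = r ! ((c + m) mod Suc n)"
      using True row \<open>length r = Suc n\<close> by (simp add: nth_append nth_rotate add.commute)
    then have "Trow m (Suc (Suc n)) ! c = 1 \<longleftrightarrow> (c + m) mod Suc n = one_col m (Suc n)"
      using "3.IH"[of "(c + m) mod Suc n"] by (simp add: r_def)
    also have "\<dots> \<longleftrightarrow> int c = int (one_col m (Suc (Suc n)))"
      unfolding int_one_col_Suc_Suc
      by (rule add_mod_eq_iff_eq_diff_mod[OF True one_col_less]) simp
    also have "\<dots> \<longleftrightarrow> c = one_col m (Suc (Suc n))"
      by (rule of_nat_eq_iff)
    finally show ?thesis .
  next
    case False
    then have "c = Suc n" using "3.prems" by simp
    moreover have "hd r \<ge> 1"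
    proof -
      have "r \<noteq> []" using \<open>length r = Suc n\<close> by auto
      then show ?thesis using Trow_ge_1 hd_in_set unfolding r_def by blast
    qed
    ultimately show ?thesis
      using row \<open>length r = Suc n\<close> one_col_Suc_Suc_less[of m n] by (simp add: nth_append)
  qed
qed auto

lemma jcol_eq_one_col: "x \<ge> 1 \<Longrightarrow> jcol m x = one_col m x"
  unfolding jcol_def by (rule the_equality) (use Trow_nth_eq_1_iff one_col_less in auto)

lemma minus_one_minus_mod: "t < L \<Longrightarrow> (- 1 - int t) mod int L = int L - 1 - int t"
proof -
  assume "t < L"
  have "- 1 - int t = (int L - 1 - int t) + (- 1) * int L" by simp
  then have "(- 1 - int t) mod int L = (int L - 1 - int t) mod int L"
    by (metis mod_mult_self1)
  with \<open>t < L\<close> show ?thesis by simp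
qed

lemma one_col_eq_josephus_offset:
  "x \<ge> 1 \<Longrightarrow> int (one_col m x) = (int m - 1 - int (josephus_offset (m + 1) x)) mod int x"
proof (induction m x rule: one_col.induct)
  case (3 m n)
  define L where "L = Suc n"
  define t where "t = josephus_offset (m + 1) L"
  have "t < L" using josephus_offset_less by (simp add: t_def L_def)
  have "int (one_col m (Suc L)) = (int (one_col m L) - int m) mod int L"
    by (simp add: L_def)
  also have "\<dots> = (- 1 - int t) mod int L"
    using "3.IH" by (simp add: L_def t_def mod_diff_left_eq)
  also have "\<dots> = int L - 1 - int t"
    using minus_one_minus_mod[OF \<open>t < L\<close>] .
  also have "\<dots> = (- 1 - int (t + 1)) mod int (Suc L)"
    using minus_one_minus_mod[of "t + 1" "Suc L"] \<open>t < L\<close> by simp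
  also have "\<dots> = (int m - 1 - (int m + 1 + int t)) mod int (Suc L)"
    by simp
  also have "\<dots> = (int m - 1 - int (josephus_offset (m + 1) (Suc L))) mod int (Suc L)"
  proof -
    have "int (josephus_offset (m + 1) (Suc L)) = (int m + 1 + int t) mod int (Suc L)"
      by (simp add: L_def t_def of_nat_mod ac_simps)
    then show ?thesis by (simp only: mod_diff_right_eq)
  qed
  finally show ?case by (simp add: L_def)
qed auto

lemma game_last_col_eq_josephus_offset:
  assumes "m > 0" "x \<ge> 1"
  shows "int (game_last_col m x) = (int m - 1 - int (josephus_offset (m + 1) x)) mod int x"
proof -
  define s where "s = x - 1 - (m - 1) mod x"
  define p where "p = (s + josephus_offset (m + 1) x) mod x"
  have "p < x" using assms(2) by (simp add: p_def)
  have "game_last_col m x = x - 1 - p"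
    using elim_last_eq_nth_offset[of "m + 1" "rev [0..<x]" s] assms(2) \<open>p < x\<close>
    by (simp add: game_last_col_def rev_nth p_def s_def)
  then have "int (game_last_col m x) = (int x - 1 - int p) mod int x"
    using \<open>p < x\<close> by simp
  also have "\<dots> = (int x - 1 - (int s + int (josephus_offset (m + 1) x))) mod int x"
    unfolding p_def of_nat_mod of_nat_add by (rule mod_diff_right_eq)
  also have "\<dots> = (int ((m - 1) mod x) - int (josephus_offset (m + 1) x)) mod int x"
  proof -
    have "(m - 1) mod x < x" using assms(2) by simp
    then have "int s = int x - 1 - int ((m - 1) mod x)" by (simp add: s_def of_nat_diff)
    then show ?thesis by simp
  qed
  also have "\<dots> = (int m - 1 - int (josephus_offset (m + 1) x)) mod int x"
  proof -
    have "int ((m - 1) mod x) = (int m - 1) mod int x" using assms(1) by (simp add: of_nat_mod)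
    then show ?thesis by (simp only: mod_diff_left_eq)
  qed
  finally show ?thesis .
qed

theorem mainTheorem19:
  fixes m x :: nat
  assumes "m > 0" and "x > 1"
  shows "josephus (m + 1) x \<in> {1..x}
         \<and> [int (josephus (m + 1) x) = int m - int (jcol m x)] (mod int x)
         \<and> Trow m x ! game_last_col m x = 1"
proof -
  have "x \<ge> 1" using assms(2) by simp
  define t where "t = josephus_offset (m + 1) x"
  have J: "josephus (m + 1) x = t + 1"
    using josephus_eq_offset_plus_1 \<open>x \<ge> 1\<close> by (simp add: t_def)
  have j: "int (jcol m x) = (int m - 1 - int t) mod int x"
    using one_col_eq_josephus_offset \<open>x \<ge> 1\<close> by (simp add: jcol_eq_one_col t_def)
  have "[int (josephus (m + 1) x) = int m - int (jcol m x)] (mod int x)"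
    unfolding cong_def J j by (simp add: mod_diff_right_eq)
  moreover have "game_last_col m x = one_col m x"
    using game_last_col_eq_josephus_offset[OF assms(1) \<open>x \<ge> 1\<close>]
      one_col_eq_josephus_offset[OF \<open>x \<ge> 1\<close>, where m = m] by simp
  moreover have "t < x" using josephus_offset_less \<open>x \<ge> 1\<close> by (simp add: t_def)
  ultimately show ?thesis
    using J Trow_nth_eq_1_iff[OF \<open>x \<ge> 1\<close>] one_col_less[OF \<open>x \<ge> 1\<close>] by simp
qed

end
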